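(* For any $\alpha\in[0,1]$, the approximation $R_{\alpha}(D)$ and the exact rate-distortion function $R(D)$ satisfy: (i) if $0<D\leq n\lambda_{\min}$, then $$0\leq \frac{R_{\alpha}(D)-R(D)}{n}\leq \frac{1}{2}\log(1+\alpha);$$ (ii) if $n\lambda_{\min}< D\leq {\rm tr}(\bm \Sigma)$, then $$\frac{1}{2}\log(1+\alpha) - \frac{1}{2}\log \frac{\lambda_{{\rm mean}}}{\lambda_{\min}} \leq \frac{R_{\alpha}(D) - R(D)}{n} \leq \frac{1}{2}\log(1+\alpha),$$ where $\lambda_{{\rm mean}}=(\lambda_1+ \ldots +\lambda_n)/n={\rm tr}(\bm \Sigma)/n$.
   Context: Let $\bm X\in\mathbb{R}^n$ be a Gaussian random vector (arbitrary mean) with covariance matrix $\bm\Sigma$ (symmetric, positive semidefinite), having eigenvalues $\lambda_1,\ldots,\lambda_n$, and let $\lambda_{\min}=\min\{\lambda_1,\ldots,\lambda_n\}$. Its rate-distortion function under mean squared error distortion $\mathbb{E}[\|\bm X-\hat{\bm X}\|^2]\le D$ is $$R(D)=\sum_{i=1}^{n}\frac{1}{2}\log\frac{\lambda_i}{D_{i}},\qquad D_i=\min\{L,\lambda_i\},$$ where $L$ is chosen so that $\sum_{i=1}^n D_i=D$ (reverse water-filling); in particular $R(D)=0$ for $D\ge{\rm tr}(\bm\Sigma)$. For $\alpha\in[0,1]$ and $D>0$, define the approximation $$R_\alpha(D)=\frac{1}{2}\log\det \Big(\alpha \bm I+\frac{n}{D}\bm \Sigma\Big).$$ *)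

theory Defs
  imports "HOL-Analysis.Analysis"
begin

definition water_level :: "('n::finite \<Rightarrow> real) \<Rightarrow> real \<Rightarrow> real" where
  "water_level lam D = (SOME L. (\<Sum>i\<in>UNIV. min L (lam i)) = D)"

text \<open>Rate-distortion function of a Gaussian vector with covariance eigenvalues lam
  (natural logarithm), via reverse water-filling; it is 0 for D at least the trace.\<close>
definition gauss_rdf :: "('n::finite \<Rightarrow> real) \<Rightarrow> real \<Rightarrow> real" where
  "gauss_rdf lam D =
     (if D \<ge> (\<Sum>i\<in>UNIV. lam i) then 0
      else (\<Sum>i\<in>UNIV. ln (lam i / min (water_level lam D) (lam i)) / 2))"

definition approx_rdf :: "real \<Rightarrow> real^'n::finite^'n \<Rightarrow> real \<Rightarrow> real" where
  "approx_rdf \<alpha> \<Sigma> D = ln (det (mat \<alpha> + (real CARD('n) / D) *\<^sub>R \<Sigma>)) / 2"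

end

(*
  The determinant det (alpha I + (n/D) Sigma) is the product of the alpha + n lambda_i / D, and
  reverse water-filling writes R(D) as the sum of (1/2) ln (lambda_i / D_i) with D_i = min L lambda_i
  and sum D_i = D. The i-th term of 2 (R_alpha(D) - R(D)) is therefore
  ln (alpha D_i / lambda_i + n D_i / D).

  Since D_i <= lambda_i this is at most ln (alpha + n D_i / D), and Jensen's inequality for ln
  bounds the sum by n ln (1 + alpha). Concavity of ln with weights alpha/(1+alpha) and 1/(1+alpha)
  bounds the term below by ln (1 + alpha) + (alpha ln (D_i / lambda_i) + ln (n D_i / D)) / (1 + alpha);
  if n lambda_min < D then every D_i is at least lambda_min, and both sums are at least
  -n ln (lambda_mean / lambda_min). If D <= n lambda_min, all D_i equal D / n and each term is
  ln (alpha + n lambda_i / D) - ln (n lambda_i / D) >= 0.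
*)

theory Submission
  imports Defs "HOL-Computational_Algebra.Polynomial"
begin

lemma det_scaleR:
  fixes A :: "real^'n::finite^'n"
  shows "det (c *\<^sub>R A) = c ^ CARD('n) * det A"
  unfolding det_def sum_distrib_left
  by (intro sum.cong) (auto simp: prod.distrib)

lemma det_mat_add_scaleR:
  fixes A :: "real^'n::finite^'n" and lam :: "'n \<Rightarrow> real"
  assumes eigenvalues: "\<forall>x. det (mat x - A) = (\<Prod>i\<in>UNIV. x - lam i)" and "c \<noteq> 0"
  shows "det (mat a + c *\<^sub>R A) = (\<Prod>i\<in>UNIV. a + c * lam i)"
proof -
  have "mat a + c *\<^sub>R A = (- c) *\<^sub>R (mat (- a / c) - A)"
    using \<open>c \<noteq> 0\<close> by (simp add: vec_eq_iff mat_def algebra_simps)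
  then have "det (mat a + c *\<^sub>R A) = (- c) ^ CARD('n) * det (mat (- a / c) - A)"
    by (simp only: det_scaleR)
  also have "\<dots> = (\<Prod>i::'n\<in>UNIV. - c) * (\<Prod>i\<in>UNIV. - a / c - lam i)"
    by (simp add: eigenvalues)
  also have "\<dots> = (\<Prod>i\<in>UNIV. (- c) * (- a / c - lam i))"
    by (rule prod.distrib[symmetric])
  also have "\<dots> = (\<Prod>i\<in>UNIV. a + c * lam i)"
    using \<open>c \<noteq> 0\<close> by (intro prod.cong) (auto simp: field_simps)
  finally show ?thesis .
qed

lemma eigenvalue_nonneg_if_psd:
  fixes A :: "real^'n::finite^'n" and lam :: "'n \<Rightarrow> real"
  assumes eigenvalues: "\<forall>x. det (mat x - A) = (\<Prod>i\<in>UNIV. x - lam i)"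
    and psd: "\<forall>x. 0 \<le> x \<bullet> (A *v x)"
  shows "0 \<le> lam j"
proof -
  have "(\<Prod>i\<in>UNIV. lam j - lam i) = 0"
    by (rule prod_zero) auto
  then have "det (mat (lam j) - A) = 0"
    using eigenvalues by simp
  then have "\<not> invertible (mat (lam j) - A)"
    by (simp add: invertible_det_nz)
  then obtain v where v: "(mat (lam j) - A) *v v = 0" "v \<noteq> 0"
    unfolding invertible_left_inverse matrix_left_invertible_ker by blast
  have "mat (lam j) *v v = lam j *\<^sub>R v"
    by (simp add: vec_eq_iff matrix_vector_mult_def mat_def if_distrib[of "\<lambda>x. x * _"] cong: if_cong)
  with v have "A *v v = lam j *\<^sub>R v"
    by (simp add: matrix_vector_mult_diff_rdistrib)
  then have "0 \<le> lam j * (v \<bullet> v)"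
    using psd by (metis inner_scaleR_right)
  moreover have "0 < v \<bullet> v"
    using v by simp
  ultimately show ?thesis
    by (simp add: zero_le_mult_iff)
qed

definition charpoly :: "'a::comm_ring_1^'n::finite^'n \<Rightarrow> 'a poly" where
  "charpoly A = (\<Sum>p | p permutes UNIV.
     smult (of_int (sign p)) (\<Prod>i\<in>UNIV. [:- A$i$p i, of_bool (p i = i):]))"

lemma poly_charpoly: "poly (charpoly A) x = det (mat x - A)"
  unfolding charpoly_def det_def poly_sum poly_smult poly_prod
  by (intro sum.cong refl arg_cong2[where f = times] prod.cong) (auto simp: mat_def)

lemma coeff_prod_monic_linear:
  fixes a :: "'b \<Rightarrow> 'a::comm_ring_1"
  assumes "finite S"
  shows "coeff (\<Prod>i\<in>S. [:- a i, 1:]) (card S) = 1 \<and>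
         (S \<noteq> {} \<longrightarrow> coeff (\<Prod>i\<in>S. [:- a i, 1:]) (card S - 1) = - sum a S)"
  using assms
proof (induction S rule: finite_induct)
  case empty
  then show ?case by simp
next
  case (insert j S)
  define P where "P = (\<Prod>i\<in>S. [:- a i, 1:])"
  have "degree P \<le> card S"
    unfolding P_def using degree_prod_sum_le[OF insert(1), of "\<lambda>i. [:- a i, 1:]"]
    by (simp add: o_def)
  then have "coeff P (Suc (card S)) = 0"
    by (intro coeff_eq_0) simp
  moreover have "(\<Prod>i\<in>insert j S. [:- a i, 1:]) = smult (- a j) P + pCons 0 P"
    using insert by (simp add: P_def mult_pCons_left)
  moreover have "coeff P (card S) = 1"
    using insert.IH P_def by simp
  moreover have "coeff P (card S - 1) = - sum a S" if "card S \<noteq> 0"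
    using insert.IH that P_def by auto
  ultimately show ?case
    using insert(1,2) by (cases "card S") auto
qed

lemma card_fixpoints_add_2_le:
  assumes "p permutes (UNIV :: 'n::finite set)" "p \<noteq> id"
  shows "card {i. p i = i} + 2 \<le> CARD('n)"
proof -
  obtain i where i: "p i \<noteq> i"
    using assms(2) by (auto simp: fun_eq_iff)
  then have "p (p i) \<noteq> p i"
    using permutes_inj[OF assms(1)] by (metis injD)
  with i have "card ({k. p k = k} \<union> {i, p i}) = card {k. p k = k} + 2"
    by (subst card_Un_disjoint) auto
  moreover have "card ({k. p k = k} \<union> {i, p i}) \<le> CARD('n)"
    by (rule card_mono) simp_all
  ultimately show ?thesis
    by linarith
qed

lemma coeff_charpoly_trace:
  fixes A :: "'a::comm_ring_1^'n::finite^'n"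
  shows "coeff (charpoly A) (CARD('n) - 1) = - trace A"
proof -
  define f where "f p = (\<Prod>i\<in>UNIV. [:- A$i$p i, of_bool (p i = i):])" for p :: "'n \<Rightarrow> 'n"
  \<comment> \<open>Only the diagonal entries carry x, and a permutation other than the identity misses at
    least two of them.\<close>
  have non_identity: "coeff (f p) (CARD('n) - 1) = 0" if "p permutes UNIV" "p \<noteq> id" for p
  proof -
    have "degree [:- A$i$p i, of_bool (p i = i):] \<le> of_bool (p i = i)" for i
      by (cases "p i = i") auto
    then have "degree (f p) \<le> (\<Sum>i\<in>UNIV. of_bool (p i = i))"
      unfolding f_def by (intro order_trans[OF degree_prod_sum_le] sum_mono) auto
    also have "\<dots> = card {i. p i = i}"
      by (simp add: sum_of_bool_eq)
    finally show ?thesis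
      using card_fixpoints_add_2_le[OF that] by (intro coeff_eq_0) linarith
  qed
  have "coeff (charpoly A) (CARD('n) - 1) = of_int (sign (id :: 'n \<Rightarrow> 'n)) * coeff (f id) (CARD('n) - 1)"
    unfolding charpoly_def coeff_sum f_def[symmetric] coeff_smult
    using non_identity by (subst sum.remove[of _ id]) (auto simp: permutes_id intro!: sum.neutral)
  also have "\<dots> = - trace A"
    using coeff_prod_monic_linear[of UNIV "\<lambda>i. A$i$i"] by (simp add: f_def sign_id trace_def)
  finally show ?thesis .
qed

lemma trace_eq_sum_eigenvalues:
  fixes A :: "'a::{idom,ring_char_0}^'n::finite^'n" and lam :: "'n \<Rightarrow> 'a"
  assumes "\<forall>x. det (mat x - A) = (\<Prod>i\<in>UNIV. x - lam i)"
  shows "trace A = sum lam UNIV"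
proof -
  have "charpoly A = (\<Prod>i\<in>UNIV. [:- lam i, 1:])"
    using assms by (simp flip: poly_eq_poly_eq_iff add: fun_eq_iff poly_charpoly poly_prod)
  then show ?thesis
    using coeff_charpoly_trace[of A] coeff_prod_monic_linear[of UNIV lam] by simp
qed

lemma sum_ln_le_card_mult_ln_mean:
  fixes x :: "'a \<Rightarrow> real"
  assumes "finite S" "S \<noteq> {}" "\<And>i. i \<in> S \<Longrightarrow> 0 < x i"
  shows "(\<Sum>i\<in>S. ln (x i)) \<le> card S * ln (sum x S / card S)"
proof -
  have "(\<Sum>i\<in>S. (1 / card S) * ln (x i)) \<le> ln (\<Sum>i\<in>S. (1 / card S) *\<^sub>R x i)"
    using assms by (intro concave_on_sum[OF _ _ ln_concave]) auto
  then show ?thesis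
    using assms
    by (simp add: sum_distrib_left[symmetric] sum_divide_distrib[symmetric] pos_divide_le_eq
        card_gt_0_iff mult.commute)
qed

lemma ln_add_ge_weighted:
  fixes a u v :: real
  assumes "0 \<le> a" "0 < u" "0 < v"
  shows "ln (1 + a) + (a * ln u + ln v) / (1 + a) \<le> ln (a * u + v)"
proof -
  have "(1 - 1 / (1 + a)) * ln ((1 + a) * u) + 1 / (1 + a) * ln ((1 + a) * v)
      \<le> ln ((1 - 1 / (1 + a)) *\<^sub>R ((1 + a) * u) + (1 / (1 + a)) *\<^sub>R ((1 + a) * v))"
    using assms by (intro concave_onD[OF ln_concave]) auto
  also have "(1 - 1 / (1 + a)) *\<^sub>R ((1 + a) * u) + (1 / (1 + a)) *\<^sub>R ((1 + a) * v) = a * u + v"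
    using assms(1) by (simp add: divide_simps)
  also have "(1 - 1 / (1 + a)) * ln ((1 + a) * u) + 1 / (1 + a) * ln ((1 + a) * v)
      = ln (1 + a) + (a * ln u + ln v) / (1 + a)"
    using assms by (simp add: ln_mult divide_simps) (simp add: algebra_simps)
  finally show ?thesis .
qed

lemma ln_add_mult_sub_ln_div_le:
  fixes \<alpha> c l d :: real
  assumes "0 \<le> \<alpha>" "0 \<le> d" "d \<le> l" "0 < l \<Longrightarrow> 0 < d" "0 < \<alpha> + c * l"
  shows "ln (\<alpha> + c * l) - ln (l / d) \<le> ln (\<alpha> + c * d)"
proof (cases "l = 0")
  case True
  then show ?thesis
    using assms(2,3) by simp
next
  case False
  then have "0 < l" "0 < d"
    using assms(2-4) by linarith+
  then have "ln (\<alpha> + c * l) - ln (l / d) = ln ((\<alpha> + c * l) * d / l)"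
    using assms(5) by (simp add: ln_div ln_mult)
  also have "\<dots> \<le> ln (\<alpha> + c * d)"
  proof (rule ln_mono)
    show "0 < (\<alpha> + c * l) * d / l"
      using \<open>0 < l\<close> \<open>0 < d\<close> assms(5) by simp
    have "\<alpha> * (d / l) \<le> \<alpha>"
      using \<open>0 < l\<close> assms(1,3) by (intro mult_left_le) auto
    then show "(\<alpha> + c * l) * d / l \<le> \<alpha> + c * d"
      using \<open>0 < l\<close> by (simp add: field_simps)
  qed
  finally show ?thesis .
qed

lemma ln_add_mult_sub_ln_div_ge:
  fixes \<alpha> c l d :: real
  assumes "0 \<le> \<alpha>" "0 < c" "0 < d" "0 < l"
  shows "ln (1 + \<alpha>) + (\<alpha> * ln (d / l) + ln (c * d)) / (1 + \<alpha>) \<le> ln (\<alpha> + c * l) - ln (l / d)"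
proof -
  have "0 < \<alpha> + c * l"
    using assms by (simp add: add_nonneg_pos)
  with assms have "ln (\<alpha> + c * l) - ln (l / d) = ln ((\<alpha> + c * l) * d / l)"
    by (simp add: ln_div ln_mult)
  also have "(\<alpha> + c * l) * d / l = \<alpha> * (d / l) + c * d"
    using assms(4) by (simp add: field_simps)
  finally show ?thesis
    using ln_add_ge_weighted[of \<alpha> "d / l" "c * d"] assms by simp
qed

lemma ln_prod_sub_sum_ln_div_le:
  fixes lam d :: "'n::finite \<Rightarrow> real"
  assumes "0 \<le> \<alpha>" "0 < D" "\<And>i. 0 \<le> d i" "\<And>i. d i \<le> lam i" "\<And>i. 0 < lam i \<Longrightarrow> 0 < d i"
    and "sum d UNIV = D"
  shows "ln (\<Prod>i\<in>UNIV. \<alpha> + CARD('n) / D * lam i) - (\<Sum>i\<in>UNIV. ln (lam i / d i))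
    \<le> CARD('n) * ln (1 + \<alpha>)"
proof (cases "\<exists>i. \<alpha> + CARD('n) / D * lam i = 0")
  case True
  \<comment> \<open>Possible only for \<alpha> = 0 and a zero eigenvalue; then the product vanishes and ln 0 = 0.\<close>
  have "0 \<le> ln (lam i / d i)" for i
    using assms(3,4)[of i] by (cases "d i = 0") auto
  then have "0 \<le> (\<Sum>i\<in>UNIV. ln (lam i / d i))"
    by (intro sum_nonneg)
  moreover have "(\<Prod>i\<in>UNIV. \<alpha> + CARD('n) / D * lam i) = 0"
    using True by (intro prod_zero) auto
  moreover have "0 \<le> CARD('n) * ln (1 + \<alpha>)"
    using assms(1) by simp
  ultimately show ?thesis
    by (simp del: prod_zero_iff)
next
  case False
  let ?c = "CARD('n) / D"
  have "0 \<le> \<alpha> + ?c * lam i" for i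
    using assms(1,2) assms(3,4)[of i] by (intro add_nonneg_nonneg mult_nonneg_nonneg) auto
  with False have a_pos: "0 < \<alpha> + ?c * lam i" for i
    by (metis less_eq_real_def)
  have "0 < \<alpha> + ?c * d i" for i
    using a_pos[of i] assms(1,2) assms(3-5)[of i]
    by (cases "lam i = 0") (auto simp: add_nonneg_pos)
  have "ln (\<Prod>i\<in>UNIV. \<alpha> + ?c * lam i) - (\<Sum>i\<in>UNIV. ln (lam i / d i))
      = (\<Sum>i\<in>UNIV. ln (\<alpha> + ?c * lam i) - ln (lam i / d i))"
    using False by (simp add: ln_prod sum_subtractf)
  also have "\<dots> \<le> (\<Sum>i\<in>UNIV. ln (\<alpha> + ?c * d i))"
    using assms a_pos by (intro sum_mono ln_add_mult_sub_ln_div_le) auto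
  also have "\<dots> \<le> CARD('n) * ln ((\<Sum>i\<in>UNIV. \<alpha> + ?c * d i) / CARD('n))"
    using sum_ln_le_card_mult_ln_mean[of UNIV "\<lambda>i. \<alpha> + ?c * d i"] \<open>\<And>i. 0 < \<alpha> + ?c * d i\<close>
    by simp
  also have "(\<Sum>i\<in>UNIV. \<alpha> + ?c * d i) / CARD('n) = 1 + \<alpha>"
    using assms(2,6)
    by (simp add: sum.distrib field_simps flip: sum_distrib_left sum_distrib_right sum_divide_distrib)
  finally show ?thesis .
qed

lemma sum_ln_div_ge_neg_ln_mean:
  fixes lam d :: "'n::finite \<Rightarrow> real"
  assumes "0 < m" "\<And>i. m \<le> d i" "\<And>i. d i \<le> lam i"
  shows "- (CARD('n) * ln (sum lam UNIV / CARD('n) / m)) \<le> (\<Sum>i\<in>UNIV. ln (d i / lam i))"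
proof -
  have d_pos: "0 < d i" and lam_pos: "0 < lam i" for i
    using assms(1) assms(2,3)[of i] by linarith+
  have "(\<Sum>i\<in>UNIV. ln (lam i / d i)) \<le> CARD('n) * ln ((\<Sum>i\<in>UNIV. lam i / d i) / CARD('n))"
    using d_pos lam_pos by (intro sum_ln_le_card_mult_ln_mean) auto
  also have "\<dots> \<le> CARD('n) * ln ((\<Sum>i\<in>UNIV. lam i / m) / CARD('n))"
    using assms d_pos lam_pos
    by (intro mult_left_mono ln_mono divide_right_mono sum_mono divide_left_mono sum_pos divide_pos_pos)
      (auto simp: less_imp_le)
  also have "(\<Sum>i\<in>UNIV. lam i / m) / CARD('n) = sum lam UNIV / CARD('n) / m"
    by (simp flip: sum_divide_distrib)
  moreover have "ln (d i / lam i) = - ln (lam i / d i)" for i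
    using d_pos lam_pos by (simp add: ln_div)
  ultimately show ?thesis
    by (simp add: sum_negf)
qed

lemma sum_ln_mult_ge_neg_ln_mean:
  fixes lam d :: "'n::finite \<Rightarrow> real"
  assumes "0 < m" "\<And>i. m \<le> d i" "sum d UNIV = D" "D \<le> sum lam UNIV"
  shows "- (CARD('n) * ln (sum lam UNIV / CARD('n) / m)) \<le> (\<Sum>i\<in>UNIV. ln (CARD('n) / D * d i))"
proof -
  let ?n = "real CARD('n)"
  have "?n * m \<le> D"
    using assms(2,3) sum_mono[of UNIV "\<lambda>_. m" d] by simp
  moreover have "0 < ?n * m"
    using assms(1) by simp
  ultimately have "0 < D"
    by linarith
  have "- ln (sum lam UNIV / ?n / m) \<le> ln (?n / D * d i)" for i
  proof -
    have "- ln (sum lam UNIV / ?n / m) = ln (?n * m / sum lam UNIV)"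
      using assms(1,4) \<open>0 < D\<close> by (simp add: ln_div)
    also have "\<dots> \<le> ln (?n * d i / D)"
      using assms \<open>0 < D\<close> order_less_le_trans[OF assms(1) assms(2)[of i]]
      by (intro ln_mono frac_le mult_left_mono) auto
    finally show ?thesis
      by simp
  qed
  then show ?thesis
    using sum_mono[of UNIV "\<lambda>_. - ln (sum lam UNIV / ?n / m)" "\<lambda>i. ln (?n / D * d i)"] by simp
qed

lemma ln_prod_sub_sum_ln_div_ge:
  fixes lam d :: "'n::finite \<Rightarrow> real"
  assumes "0 \<le> \<alpha>" "0 < m" "\<And>i. m \<le> d i" "\<And>i. d i \<le> lam i"
    and "sum d UNIV = D" "D \<le> sum lam UNIV"
  shows "CARD('n) * ln (1 + \<alpha>) - CARD('n) * ln (sum lam UNIV / CARD('n) / m)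
    \<le> ln (\<Prod>i\<in>UNIV. \<alpha> + CARD('n) / D * lam i) - (\<Sum>i\<in>UNIV. ln (lam i / d i))"
proof -
  let ?n = "real CARD('n)" and ?c = "CARD('n) / D"
  define l where "l = ?n * ln (sum lam UNIV / ?n / m)"
  have d_pos: "0 < d i" and lam_pos: "0 < lam i" for i
    using assms(2) assms(3,4)[of i] by linarith+
  then have "0 < D"
    using assms(5) by (metis finite UNIV_not_empty sum_pos)
  have "- l \<le> (\<Sum>i\<in>UNIV. ln (?c * d i))"
    unfolding l_def using sum_ln_mult_ge_neg_ln_mean[of m d D lam] assms(2,3,5,6) by blast
  moreover have "\<alpha> * - l \<le> \<alpha> * (\<Sum>i\<in>UNIV. ln (d i / lam i))"
    using mult_left_mono[OF sum_ln_div_ge_neg_ln_mean[of m d lam, OF assms(2-4)] assms(1)]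
    unfolding l_def .
  ultimately have "(1 + \<alpha>) * - l \<le> \<alpha> * (\<Sum>i\<in>UNIV. ln (d i / lam i)) + (\<Sum>i\<in>UNIV. ln (?c * d i))"
    by (simp add: distrib_right)
  then have "?n * ln (1 + \<alpha>) - l
      \<le> ?n * ln (1 + \<alpha>) + (\<alpha> * (\<Sum>i\<in>UNIV. ln (d i / lam i)) + (\<Sum>i\<in>UNIV. ln (?c * d i))) / (1 + \<alpha>)"
    using assms(1) by (simp add: pos_le_divide_eq mult.commute)
  also have "\<dots> = (\<Sum>i\<in>UNIV. ln (1 + \<alpha>) + (\<alpha> * ln (d i / lam i) + ln (?c * d i)) / (1 + \<alpha>))"
    by (simp add: sum.distrib sum_distrib_left flip: sum_divide_distrib)
  also have "\<dots> \<le> (\<Sum>i\<in>UNIV. ln (\<alpha> + ?c * lam i) - ln (lam i / d i))"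
    using assms(1) \<open>0 < D\<close> d_pos lam_pos by (intro sum_mono ln_add_mult_sub_ln_div_ge) auto
  also have "\<dots> = ln (\<Prod>i\<in>UNIV. \<alpha> + ?c * lam i) - (\<Sum>i\<in>UNIV. ln (lam i / d i))"
  proof -
    have "\<alpha> + ?c * lam i \<noteq> 0" for i
      using add_nonneg_pos[OF assms(1), of "?c * lam i"] \<open>0 < D\<close> lam_pos[of i] by simp
    then show ?thesis
      by (simp add: ln_prod sum_subtractf)
  qed
  finally show ?thesis
    by (simp add: l_def)
qed

lemma water_level_spec:
  fixes lam :: "'n::finite \<Rightarrow> real"
  assumes "\<And>i. 0 \<le> lam i" "0 < D" "D < sum lam UNIV"
  shows "(\<Sum>i\<in>UNIV. min (water_level lam D) (lam i)) = D" "0 < water_level lam D"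
proof -
  let ?f = "\<lambda>L. \<Sum>i\<in>UNIV. min L (lam i)"
  let ?M = "Max (range lam)"
  have lam_le_Max: "lam i \<le> ?M" for i
    by simp
  have "?f 0 = 0"
    using assms(1) by (simp add: min_absorb1)
  moreover have "?f ?M = sum lam UNIV"
    using lam_le_Max by (simp add: min_absorb2)
  moreover have "0 \<le> ?M"
    using assms(1) lam_le_Max order_trans by blast
  moreover have "continuous_on {0..?M} ?f"
    by (intro continuous_intros)
  ultimately have "\<exists>L. ?f L = D"
    using assms(2,3) IVT'[of ?f 0 D ?M] by auto
  then show sum_eq: "?f (water_level lam D) = D"
    unfolding water_level_def by (rule someI_ex)
  show "0 < water_level lam D"
  proof (rule ccontr)
    assume "\<not> 0 < water_level lam D"
    then have "?f (water_level lam D) \<le> ?f 0"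
      by (intro sum_mono) auto
    with sum_eq \<open>?f 0 = 0\<close> assms(2) show False
      by simp
  qed
qed

lemma gauss_rdf_water_filling:
  fixes lam :: "'n::finite \<Rightarrow> real"
  assumes "\<And>i. 0 \<le> lam i" "0 < D" "D \<le> sum lam UNIV"
  obtains L where "0 < L" "(\<Sum>i\<in>UNIV. min L (lam i)) = D"
    "gauss_rdf lam D = (\<Sum>i\<in>UNIV. ln (lam i / min L (lam i)) / 2)"
proof (cases "D < sum lam UNIV")
  case True
  then show ?thesis
    using that water_level_spec[OF assms(1,2) True] by (simp add: gauss_rdf_def)
next
  case False
  \<comment> \<open>When D is the sum of the eigenvalues the rate is 0, which is the water-filling formula
    for any level above all eigenvalues.\<close>
  define L where "L = Max (range lam) + 1"
  have "lam i < L" for i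
  proof -
    have "lam i \<le> Max (range lam)"
      by simp
    then show ?thesis
      unfolding L_def by linarith
  qed
  then have "min L (lam i) = lam i" for i
    by (simp add: less_imp_le)
  moreover have "0 < L"
    using assms(1) \<open>\<And>i. lam i < L\<close> by (meson order_le_less_trans)
  moreover have "ln (lam i / lam i) = 0" for i
    by (cases "lam i = 0") auto
  ultimately show ?thesis
    using that False assms(3) by (simp add: gauss_rdf_def)
qed

lemma sum_min_eq_imp_min_eq_mean:
  fixes lam :: "'n::finite \<Rightarrow> real"
  assumes "\<And>i. D \<le> CARD('n) * lam i" "(\<Sum>i\<in>UNIV. min L (lam i)) = D"
  shows "min L (lam i) = D / CARD('n)"
proof -
  have "D \<le> CARD('n) * L"
    using assms(2) sum_mono[of UNIV "\<lambda>i. min L (lam i)" "\<lambda>_. L"] by simp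
  with assms(1) have "D \<le> CARD('n) * min L (lam j)" for j
    by (simp add: min_def)
  then have ge: "0 \<le> min L (lam j) - D / CARD('n)" for j
    by (simp add: field_simps)
  have "(\<Sum>j\<in>UNIV. min L (lam j) - D / CARD('n)) = 0"
    using assms(2) by (simp add: sum_subtractf)
  then have "\<forall>j. min L (lam j) - D / CARD('n) = 0"
    using ge by (subst (asm) sum_nonneg_eq_0_iff) auto
  then show ?thesis
    by simp
qed

lemma min_ge_if_sum_min_gt:
  fixes lam :: "'n::finite \<Rightarrow> real" and m :: real
  assumes "CARD('n) * m < D" "\<And>i. m \<le> lam i" "(\<Sum>i\<in>UNIV. min L (lam i)) = D"
  shows "m \<le> min L (lam i)"
proof -
  have "m \<le> L"
  proof (rule ccontr)
    assume "\<not> m \<le> L"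
    then have "min L (lam i) = L" for i
      using assms(2)[of i] by simp
    then have "(\<Sum>i\<in>UNIV. min L (lam i)) = CARD('n) * L"
      by simp
    moreover have "CARD('n) * L < CARD('n) * m"
      using \<open>\<not> m \<le> L\<close> by (intro mult_strict_left_mono) auto
    ultimately show False
      using assms(1,3) by linarith
  qed
  then show ?thesis
    using assms(2) by simp
qed

lemma sum_ln_div_mean_le_ln_prod:
  fixes lam :: "'n::finite \<Rightarrow> real"
  assumes "0 \<le> \<alpha>" "0 < D" "\<And>i. D \<le> CARD('n) * lam i"
  shows "(\<Sum>i\<in>UNIV. ln (lam i / (D / CARD('n)))) \<le> ln (\<Prod>i\<in>UNIV. \<alpha> + CARD('n) / D * lam i)"
proof -
  have "0 < CARD('n) * lam i" for i
    using assms(2) assms(3)[of i] by linarith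
  then have lam_pos: "0 < lam i" for i
    by (simp add: zero_less_mult_iff)
  have "(\<Sum>i\<in>UNIV. ln (lam i / (D / CARD('n)))) \<le> (\<Sum>i\<in>UNIV. ln (\<alpha> + CARD('n) / D * lam i))"
    using assms(1,2) lam_pos by (intro sum_mono ln_mono) (auto simp: field_simps)
  also have "\<dots> = ln (\<Prod>i\<in>UNIV. \<alpha> + CARD('n) / D * lam i)"
  proof -
    have "\<alpha> + CARD('n) / D * lam i \<noteq> 0" for i
      using add_nonneg_pos[OF assms(1), of "CARD('n) / D * lam i"] assms(2) lam_pos[of i] by simp
    then show ?thesis
      by (simp add: ln_prod)
  qed
  finally show ?thesis .
qed

lemma gauss_rdf_gap_bounds:
  fixes lam :: "'n::finite \<Rightarrow> real" and \<alpha> D :: real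
  defines "G \<equiv> ln (\<Prod>i\<in>UNIV. \<alpha> + CARD('n) / D * lam i) / 2 - gauss_rdf lam D"
  assumes lam: "\<And>i. 0 \<le> lam i" and \<alpha>: "0 \<le> \<alpha>" and D: "0 < D" "D \<le> sum lam UNIV"
  shows "G \<le> CARD('n) * (ln (1 + \<alpha>) / 2)"
    and "D \<le> CARD('n) * Min (range lam) \<Longrightarrow> 0 \<le> G"
    and "CARD('n) * Min (range lam) < D \<Longrightarrow> 0 < Min (range lam) \<Longrightarrow>
      CARD('n) * (ln (1 + \<alpha>) / 2 - ln (sum lam UNIV / CARD('n) / Min (range lam)) / 2) \<le> G"
proof -
  obtain L where L: "0 < L" "(\<Sum>i\<in>UNIV. min L (lam i)) = D"
    "gauss_rdf lam D = (\<Sum>i\<in>UNIV. ln (lam i / min L (lam i)) / 2)"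
    using gauss_rdf_water_filling[OF lam D] .
  have G: "G = (ln (\<Prod>i\<in>UNIV. \<alpha> + CARD('n) / D * lam i)
      - (\<Sum>i\<in>UNIV. ln (lam i / min L (lam i)))) / 2"
    unfolding G_def L(3) by (simp add: diff_divide_distrib flip: sum_divide_distrib)
  have Min_le: "Min (range lam) \<le> lam i" for i
    by simp
  show "G \<le> CARD('n) * (ln (1 + \<alpha>) / 2)"
    unfolding G using ln_prod_sub_sum_ln_div_le[of \<alpha> D "\<lambda>i. min L (lam i)" lam] \<alpha> D lam L
    by simp
  show "0 \<le> G" if "D \<le> CARD('n) * Min (range lam)"
  proof -
    have "CARD('n) * Min (range lam) \<le> CARD('n) * lam i" for i
      by (rule mult_left_mono) simp_all
    with that have "D \<le> CARD('n) * lam i" for i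
      by (meson order_trans)
    then have "min L (lam i) = D / CARD('n)" for i
      using sum_min_eq_imp_min_eq_mean L(2) by blast
    with \<open>\<And>i. D \<le> CARD('n) * lam i\<close> show ?thesis
      unfolding G using sum_ln_div_mean_le_ln_prod[of \<alpha> D lam] \<alpha> D by simp
  qed
  show "CARD('n) * (ln (1 + \<alpha>) / 2 - ln (sum lam UNIV / CARD('n) / Min (range lam)) / 2) \<le> G"
    if "CARD('n) * Min (range lam) < D" "0 < Min (range lam)"
    unfolding G using ln_prod_sub_sum_ln_div_ge[OF \<alpha> that(2)
        min_ge_if_sum_min_gt[OF that(1) Min_le L(2)] _ L(2) D(2)]
    by (simp add: algebra_simps)
qed

theorem theorem1:
  fixes \<Sigma> :: "real^'n^'n" and lam :: "'n \<Rightarrow> real" and \<alpha> D :: real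
  assumes sym: "transpose \<Sigma> = \<Sigma>"
    and psd: "\<forall>x. 0 \<le> x \<bullet> (\<Sigma> *v x)"
    and eig: "\<forall>x. det (mat x - \<Sigma>) = (\<Prod>i\<in>UNIV. x - lam i)"
    and alpha: "0 \<le> \<alpha>" "\<alpha> \<le> 1"
    and Dpos: "0 < D"
  shows
    "(D \<le> real CARD('n) * Min (range lam) \<longrightarrow>
        0 \<le> (approx_rdf \<alpha> \<Sigma> D - gauss_rdf lam D) / real CARD('n) \<and>
        (approx_rdf \<alpha> \<Sigma> D - gauss_rdf lam D) / real CARD('n) \<le> ln (1 + \<alpha>) / 2)
     \<and>
     (real CARD('n) * Min (range lam) < D \<and> D \<le> trace \<Sigma> \<longrightarrow>
        (0 < Min (range lam) \<longrightarrow>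
          ln (1 + \<alpha>) / 2
            - ln (((\<Sum>i\<in>UNIV. lam i) / real CARD('n)) / Min (range lam)) / 2
          \<le> (approx_rdf \<alpha> \<Sigma> D - gauss_rdf lam D) / real CARD('n)) \<and>
        (approx_rdf \<alpha> \<Sigma> D - gauss_rdf lam D) / real CARD('n) \<le> ln (1 + \<alpha>) / 2)"
proof -
  let ?n = "real CARD('n)" and ?m = "Min (range lam)"
  have lam: "\<And>i. 0 \<le> lam i"
    using eigenvalue_nonneg_if_psd[OF eig psd] .
  have approx: "approx_rdf \<alpha> \<Sigma> D = ln (\<Prod>i\<in>UNIV. \<alpha> + ?n / D * lam i) / 2"
    unfolding approx_rdf_def using det_mat_add_scaleR[OF eig, of "?n / D"] Dpos by simp
  have "?n * ?m \<le> sum lam UNIV"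
    using sum_mono[of UNIV "\<lambda>_. ?m" lam] by simp
  note bounds = gauss_rdf_gap_bounds[where lam = lam and \<alpha> = \<alpha> and D = D, OF lam alpha(1) Dpos,
    folded approx]
  show ?thesis
    using bounds \<open>?n * ?m \<le> sum lam UNIV\<close> trace_eq_sum_eigenvalues[OF eig]
    by (auto simp: pos_divide_le_eq pos_le_divide_eq mult.commute)
qed

end
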